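(* Let $\mathbb Q$ be the rationals and $D$ an uncountable set disjoint from $\mathbb Q$. Let $X=\mathbb Q\cup D$ with the topology in which every point of $D$ is isolated and a neighborhood base at $q\in\mathbb Q$ consists of the sets $I\cup (D\setminus C)$, where $I\subseteq\mathbb Q$ is a Euclidean open neighborhood of $q$ in $\mathbb Q$ and $C\subseteq D$ is countable. Then $X$ is a $T_1$-space, the strong Choquet game $Ch(X)$ is $\alpha$-favorable (indeed $\alpha$ has a winning strategy depending only on $\beta$'s last move), and $X$ has no rich family of Baire spaces; in fact, every separable subspace $S$ of $X$ with $\mathbb Q\subseteq S$ is not a Baire space.
   Context: A topological space is a Baire space if every countable intersection of dense open subsets is dense. The strong Choquet game $Ch(X)$: players $\beta$ and $\alpha$ alternate, $\beta$ first; at round $n$, $\beta$ chooses a point $x_n$ and an open set $V_n\ni x_n$ (with $V_n\subseteq U_{n-1}$ if $n\ge1$), then $\alpha$ chooses an open $U_n$ with $x_n\in U_n\subseteq V_n$; $\alpha$ wins if $\bigcap_n U_n\neq\emptyset$. $Ch(X)$ is $\alpha$-favorable if $\alpha$ has a winning strategy. A rich family of Baire spaces for $X$ is a family $\mathcal F$ of nonempty separable closed Baire subspaces of $X$ such that every separable subset of $X$ is contained in some $F\in\mathcal F$, and $\overline{\bigcup_{n<\omega}F_n}\in\mathcal F$ whenever $\{F_n:n<\omega\}\subseteq\mathcal F$. *)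

theory Defs
  imports "HOL-Analysis.Analysis"
begin

text \<open>Baire space: every countable intersection of dense open subsets is dense.
  (A countable family is given as a sequence; finite and empty families are covered
  by repetition resp. the convention that the empty intersection is the whole space.)\<close>
definition baire_space :: "'a topology \<Rightarrow> bool" where
  "baire_space X \<longleftrightarrow>
     (\<forall>G :: nat \<Rightarrow> 'a set.
        (\<forall>n. openin X (G n) \<and> X closure_of (G n) = topspace X) \<longrightarrow>
        X closure_of (topspace X \<inter> (\<Inter>n. G n)) = topspace X)"

text \<open>A strategy for alpha maps the finite history of beta's moves
  (x_0,V_0),...,(x_n,V_n) to alpha's answer U_n (alpha's own earlier moves are determined
  by the strategy).\<close>
definition choquet_alpha_winning :: "'a topology \<Rightarrow> (('a \<times> 'a set) list \<Rightarrow> 'a set) \<Rightarrow> bool" where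
  "choquet_alpha_winning X \<sigma> \<longleftrightarrow>
     (\<forall>h x V. openin X V \<and> x \<in> V \<longrightarrow>
        openin X (\<sigma> (h @ [(x, V)])) \<and> x \<in> \<sigma> (h @ [(x, V)]) \<and> \<sigma> (h @ [(x, V)]) \<subseteq> V) \<and>
     (\<forall>(x :: nat \<Rightarrow> 'a) (V :: nat \<Rightarrow> 'a set).
        (\<forall>n. openin X (V n) \<and> x n \<in> V n) \<and>
        (\<forall>n. V (Suc n) \<subseteq> \<sigma> (map (\<lambda>i. (x i, V i)) [0..<Suc n])) \<longrightarrow>
        (\<Inter>n. \<sigma> (map (\<lambda>i. (x i, V i)) [0..<Suc n])) \<noteq> {})"

definition strong_choquet_alpha_favorable :: "'a topology \<Rightarrow> bool" where
  "strong_choquet_alpha_favorable X \<longleftrightarrow> (\<exists>\<sigma>. choquet_alpha_winning X \<sigma>)"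

definition strong_choquet_alpha_last_move_favorable :: "'a topology \<Rightarrow> bool" where
  "strong_choquet_alpha_last_move_favorable X \<longleftrightarrow>
     (\<exists>\<tau> :: 'a \<Rightarrow> 'a set \<Rightarrow> 'a set.
        choquet_alpha_winning X (\<lambda>h. \<tau> (fst (last h)) (snd (last h))))"

definition rich_family_of_Baire :: "'a topology \<Rightarrow> 'a set set \<Rightarrow> bool" where
  "rich_family_of_Baire X \<F> \<longleftrightarrow>
     (\<forall>F\<in>\<F>. F \<noteq> {} \<and> closedin X F \<and> separable_space (subtopology X F)
              \<and> baire_space (subtopology X F)) \<and>
     (\<forall>S. S \<subseteq> topspace X \<and> separable_space (subtopology X S) \<longrightarrow> (\<exists>F\<in>\<F>. S \<subseteq> F)) \<and>
     (\<forall>Fs :: nat \<Rightarrow> 'a set. range Fs \<subseteq> \<F> \<longrightarrow> X closure_of (\<Union>n. Fs n) \<in> \<F>)"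

text \<open>The space X = Q \<union> D, realised as the disjoint sum: rationals are Inl q, points of D
  are Inr d.\<close>
definition QD_open :: "'d set \<Rightarrow> (rat + 'd) set \<Rightarrow> bool" where
  "QD_open D U \<longleftrightarrow>
     U \<subseteq> range Inl \<union> Inr ` D \<and>
     (\<forall>q. Inl q \<in> U \<longrightarrow>
        (\<exists>W :: real set. \<exists>C. open W \<and> real_of_rat q \<in> W \<and> countable C \<and> C \<subseteq> D \<and>
           Inl ` {r. real_of_rat r \<in> W} \<union> Inr ` (D - C) \<subseteq> U))"

definition QD_topology :: "'d set \<Rightarrow> (rat + 'd) topology" where
  "QD_topology D = topology (QD_open D)"

end

theory Submission
  imports Defs
begin

text \<open>Points of \<open>D\<close> are isolated, while every neighbourhood of a rational contains all
  but countably many points of \<open>D\<close>. So \<open>\<alpha>\<close> wins by answering a move \<open>(x, V)\<close> with \<open>{x}\<close>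
  when \<open>x\<close> is isolated and with \<open>V\<close> otherwise: either the play freezes at an isolated point,
  or all of \<open>\<beta>\<close>'s sets are neighbourhoods of rationals and still share a point of the
  uncountable set \<open>D\<close>.

  Conversely, isolated points belong to every dense set, so a separable subspace
  \<open>S \<supseteq> \<rat>\<close> meets \<open>D\<close> in a countable set \<open>E\<close>. The sets \<open>S - {q}\<close>, \<open>q \<in> \<rat>\<close>, are open and
  dense in \<open>S\<close> (rationals are not isolated), but their intersection \<open>S \<inter> D\<close> misses the open set
  \<open>\<rat> \<union> (D - E)\<close>, so \<open>S\<close> is not Baire. Taking \<open>S = \<rat>\<close> rules out a rich family.\<close>

lemma separable_space_countable_topspace:
  "countable (topspace X) \<Longrightarrow> separable_space X"
  unfolding separable_space_def by (metis closure_of_topspace order_refl)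

lemma countable_isolated_points_separable_space:
  assumes "separable_space X"
  shows "countable {x \<in> topspace X. openin X {x}}"
proof -
  obtain C where C: "countable C" "X closure_of C = topspace X"
    using assms unfolding separable_space_def by blast
  have "{x \<in> topspace X. openin X {x}} \<subseteq> C"
  proof clarify
    fix x assume "x \<in> topspace X" "openin X {x}"
    then have "x \<in> X closure_of C" using C(2) by simp
    then show "x \<in> C"
      using \<open>openin X {x}\<close> unfolding in_closure_of by blast
  qed
  then show ?thesis using C(1) countable_subset by blast
qed

lemma not_baire_space_countable_nonisolated:
  assumes "t1_space X" "countable R" "R \<subseteq> topspace X"
    and nonisolated: "\<And>r. r \<in> R \<Longrightarrow> \<not> openin X {r}"
    and not_dense: "X closure_of (topspace X - R) \<noteq> topspace X"
  shows "\<not> baire_space X"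
proof
  assume "baire_space X"
  have "R \<noteq> {}" using not_dense by auto
  define G where "G n = topspace X - {from_nat_into R n}" for n
  have "openin X (G n)" for n
    unfolding G_def using \<open>t1_space X\<close> by (simp add: t1_space_openin_delete_alt)
  moreover have "X closure_of (G n) = topspace X" for n
  proof -
    have "X interior_of {from_nat_into R n} = {}"
      using nonisolated from_nat_into[OF \<open>R \<noteq> {}\<close>]
      by (auto simp: interior_of_eq_empty subset_singleton_iff)
    then show ?thesis unfolding G_def closure_of_complement by simp
  qed
  ultimately have "X closure_of (topspace X \<inter> (\<Inter>n. G n)) = topspace X"
    using \<open>baire_space X\<close> unfolding baire_space_def by blast
  moreover have "topspace X \<inter> (\<Inter>n. G n) = topspace X - R"
    using range_from_nat_into[OF \<open>R \<noteq> {}\<close> \<open>countable R\<close>] unfolding G_def by blast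
  ultimately show False using not_dense by simp
qed

definition isolating_strategy :: "'a topology \<Rightarrow> 'a \<Rightarrow> 'a set \<Rightarrow> 'a set" where
  "isolating_strategy X x V = (if openin X {x} then {x} else V)"

lemma isolating_strategy_play_nonempty:
  assumes nonisolated_nbhds:
      "\<And>x V. (\<And>n::nat. openin X (V n) \<and> x n \<in> V n \<and> \<not> openin X {x n}) \<Longrightarrow> (\<Inter>n. V n) \<noteq> {}"
    and V: "\<And>n. openin X (V n)" "\<And>n. x n \<in> V n"
    and play: "\<And>n. V (Suc n) \<subseteq> isolating_strategy X (x n) (V n)"
  shows "(\<Inter>n. isolating_strategy X (x n) (V n)) \<noteq> {}"
proof (cases "\<exists>n. openin X {x n}")
  case True
  then obtain n where n: "openin X {x n}" by blast
  let ?U = "\<lambda>n. isolating_strategy X (x n) (V n)"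
  have x_in_U: "x n \<in> ?U n" for n
    using V(2) by (simp add: isolating_strategy_def)
  have "decseq ?U"
  proof (rule decseq_SucI)
    fix k show "?U (Suc k) \<subseteq> ?U k"
      using play[of k] V(2)[of "Suc k"] by (auto simp: isolating_strategy_def)
  qed
  have x_constant: "x (n + k) = x n" for k
  proof (induction k)
    case (Suc k)
    then have "?U (n + k) = {x n}" using n by (simp add: isolating_strategy_def)
    then show ?case using play[of "n + k"] V(2)[of "Suc (n + k)"] by auto
  qed simp
  have "x n \<in> ?U m" for m
  proof (cases "m \<le> n")
    case True
    then show ?thesis using x_in_U[of n] \<open>decseq ?U\<close> by (auto dest: decseqD)
  next
    case False
    then obtain k where "m = n + k" by (metis le_add_diff_inverse nat_le_linear)
    then show ?thesis using x_in_U[of m] x_constant[of k] by simp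
  qed
  then show ?thesis by blast
next
  case False
  then show ?thesis
    using nonisolated_nbhds[of V x] V by (simp add: isolating_strategy_def)
qed

lemma choquet_alpha_winning_isolating_strategy:
  assumes "\<And>x V. (\<And>n::nat. openin X (V n) \<and> x n \<in> V n \<and> \<not> openin X {x n}) \<Longrightarrow> (\<Inter>n. V n) \<noteq> {}"
  shows "choquet_alpha_winning X (\<lambda>h. isolating_strategy X (fst (last h)) (snd (last h)))"
  unfolding choquet_alpha_winning_def
proof (rule conjI; intro allI impI)
  fix h x V assume "openin X V \<and> x \<in> V"
  then show "openin X (isolating_strategy X (fst (last (h @ [(x, V)]))) (snd (last (h @ [(x, V)]))))
    \<and> x \<in> isolating_strategy X (fst (last (h @ [(x, V)]))) (snd (last (h @ [(x, V)])))
    \<and> isolating_strategy X (fst (last (h @ [(x, V)]))) (snd (last (h @ [(x, V)]))) \<subseteq> V"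
    by (simp add: isolating_strategy_def)
next
  fix x V
  assume play: "(\<forall>n. openin X (V n) \<and> x n \<in> V n) \<and>
    (\<forall>n. V (Suc n) \<subseteq> isolating_strategy X (fst (last (map (\<lambda>i. (x i, V i)) [0..<Suc n])))
                        (snd (last (map (\<lambda>i. (x i, V i)) [0..<Suc n]))))"
  have "(\<Inter>n. isolating_strategy X (x n) (V n)) \<noteq> {}"
    by (rule isolating_strategy_play_nonempty) (use assms play in auto)
  then show "(\<Inter>n. isolating_strategy X (fst (last (map (\<lambda>i. (x i, V i)) [0..<Suc n])))
                        (snd (last (map (\<lambda>i. (x i, V i)) [0..<Suc n])))) \<noteq> {}"
    by simp
qed

lemma rich_family_of_Baire_obtains_Baire_superset:
  assumes "rich_family_of_Baire X \<F>" "S \<subseteq> topspace X" "separable_space (subtopology X S)"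
  obtains T where "S \<subseteq> T" "T \<subseteq> topspace X" "separable_space (subtopology X T)"
    "baire_space (subtopology X T)"
proof -
  obtain T where T: "T \<in> \<F>" "S \<subseteq> T"
    using assms unfolding rich_family_of_Baire_def by blast
  then have "closedin X T" "separable_space (subtopology X T)" "baire_space (subtopology X T)"
    using assms(1) unfolding rich_family_of_Baire_def by auto
  then show ?thesis using that T(2) closedin_subset by blast
qed

lemma istopology_QD_open: "istopology (QD_open D)"
  unfolding istopology_def
proof (intro conjI allI impI)
  fix S T assume S: "QD_open D S" and T: "QD_open D T"
  show "QD_open D (S \<inter> T)"
    unfolding QD_open_def
  proof (intro conjI allI impI)
    show "S \<inter> T \<subseteq> range Inl \<union> Inr ` D" using S unfolding QD_open_def by blast
    fix q assume "Inl q \<in> S \<inter> T"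
    then obtain W1 C1 W2 C2 where
      "open W1" "real_of_rat q \<in> W1" "countable C1" "C1 \<subseteq> D"
      "Inl ` {r. real_of_rat r \<in> W1} \<union> Inr ` (D - C1) \<subseteq> S"
      "open W2" "real_of_rat q \<in> W2" "countable C2" "C2 \<subseteq> D"
      "Inl ` {r. real_of_rat r \<in> W2} \<union> Inr ` (D - C2) \<subseteq> T"
      using S T unfolding QD_open_def by (metis IntD1 IntD2)
    then show "\<exists>W C. open W \<and> real_of_rat q \<in> W \<and> countable C \<and> C \<subseteq> D \<and>
        Inl ` {r. real_of_rat r \<in> W} \<union> Inr ` (D - C) \<subseteq> S \<inter> T"
      by (intro exI[of _ "W1 \<inter> W2"] exI[of _ "C1 \<union> C2"]) auto
  qed
next
  fix \<K> assume "\<forall>U\<in>\<K>. QD_open D U"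
  then show "QD_open D (\<Union>\<K>)"
    unfolding QD_open_def by (meson UnionE Union_upper dual_order.trans Sup_least)
qed

lemma openin_QD_topology: "openin (QD_topology D) = QD_open D"
  by (simp add: QD_topology_def istopology_QD_open)

lemma openin_QD_topology_basic:
  assumes "open W" "countable C"
  shows "openin (QD_topology D) (Inl ` {r. real_of_rat r \<in> W} \<union> Inr ` (D - C))"
  unfolding openin_QD_topology QD_open_def
proof (intro conjI allI impI)
  fix q assume "Inl q \<in> Inl ` {r. real_of_rat r \<in> W} \<union> Inr ` (D - C)"
  then show "\<exists>W' C'. open W' \<and> real_of_rat q \<in> W' \<and> countable C' \<and> C' \<subseteq> D \<and>
      Inl ` {r. real_of_rat r \<in> W'} \<union> Inr ` (D - C') \<subseteq> Inl ` {r. real_of_rat r \<in> W} \<union> Inr ` (D - C)"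
    using assms by (intro exI[of _ W] exI[of _ "C \<inter> D"]) auto
qed auto

lemma topspace_QD_topology: "topspace (QD_topology D) = range Inl \<union> Inr ` D"
proof
  show "topspace (QD_topology D) \<subseteq> range Inl \<union> Inr ` D"
    unfolding topspace_def openin_QD_topology QD_open_def by blast
  show "range Inl \<union> Inr ` D \<subseteq> topspace (QD_topology D)"
    using openin_subset[OF openin_QD_topology_basic[of UNIV "{}" D]] by simp
qed

lemma openin_QD_topology_Inr: "U \<subseteq> Inr ` D \<Longrightarrow> openin (QD_topology D) U"
  unfolding openin_QD_topology QD_open_def by auto

lemma t1_space_QD_topology: "t1_space (QD_topology D)"
  unfolding t1_space_closedin_singleton
proof
  fix x assume x: "x \<in> topspace (QD_topology D)"
  have "openin (QD_topology D) (topspace (QD_topology D) - {x})"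
  proof (cases x)
    case (Inl q)
    have "topspace (QD_topology D) - {x} = Inl ` {r. real_of_rat r \<in> - {real_of_rat q}} \<union> Inr ` (D - {})"
      using Inl by (auto simp: topspace_QD_topology)
    then show ?thesis
      using openin_QD_topology_basic[of "- {real_of_rat q}" "{}" D] by (simp add: open_Compl)
  next
    case (Inr d)
    have "topspace (QD_topology D) - {x} = Inl ` {r. real_of_rat r \<in> UNIV} \<union> Inr ` (D - {d})"
      using Inr by (auto simp: topspace_QD_topology)
    then show ?thesis
      using openin_QD_topology_basic[of UNIV "{d}" D] by simp
  qed
  then show "closedin (QD_topology D) {x}" using x by (simp add: closedin_def)
qed

lemma QD_nbhd_rational:
  assumes "openin (QD_topology D) U" "Inl q \<in> U"
  obtains W C where "open W" "real_of_rat q \<in> W" "countable C"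
    "Inl ` {r. real_of_rat r \<in> W} \<union> Inr ` (D - C) \<subseteq> U"
proof -
  have "\<forall>q. Inl q \<in> U \<longrightarrow> (\<exists>W C. open W \<and> real_of_rat q \<in> W \<and> countable C \<and> C \<subseteq> D \<and>
           Inl ` {r. real_of_rat r \<in> W} \<union> Inr ` (D - C) \<subseteq> U)"
    using assms(1) unfolding openin_QD_topology QD_open_def by (rule conjunct2)
  then show ?thesis using assms(2) that by meson
qed

lemma QD_nbhd_rational_cocountable:
  assumes "openin (QD_topology D) U" "Inl q \<in> U"
  obtains C where "countable C" "Inr ` (D - C) \<subseteq> U"
  using QD_nbhd_rational[OF assms] by (metis Un_subset_iff)

lemma open_rational_neighbourhood_other_rational:
  assumes "open W" "real_of_rat q \<in> W"
  obtains r where "r \<noteq> q" "real_of_rat r \<in> W"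
proof -
  obtain e where "e > 0" "ball (real_of_rat q) e \<subseteq> W"
    using assms openE by blast
  then obtain n where n: "n > 0" "inverse (real n) < e" "ball (real_of_rat q) e \<subseteq> W"
    using ex_inverse_of_nat_less by blast
  have "real_of_rat (q + inverse (of_nat n)) = real_of_rat q + inverse (real n)"
    by (simp add: of_rat_add of_rat_inverse)
  then have "real_of_rat (q + inverse (of_nat n)) \<in> W"
    using n by (auto simp: subset_iff dist_real_def)
  moreover have "q + inverse (of_nat n) \<noteq> q" using n(1) by simp
  ultimately show ?thesis using that by blast
qed

lemma QD_nbhd_rational_other_rational:
  assumes "openin (QD_topology D) U" "Inl q \<in> U"
  obtains r where "r \<noteq> q" "Inl r \<in> U"
proof -
  obtain W C where q: "open W" "real_of_rat q \<in> W" and "countable C"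
    and W: "Inl ` {r. real_of_rat r \<in> W} \<union> Inr ` (D - C) \<subseteq> U"
    by (rule QD_nbhd_rational[OF assms])
  from q obtain r where "r \<noteq> q" "real_of_rat r \<in> W"
    by (rule open_rational_neighbourhood_other_rational)
  then show ?thesis using W that by blast
qed

lemma QD_rational_not_isolated_in_subspace:
  assumes "range Inl \<subseteq> S"
  shows "\<not> openin (subtopology (QD_topology D) S) {Inl q}"
proof
  assume "openin (subtopology (QD_topology D) S) {Inl q}"
  then obtain U where U: "openin (QD_topology D) U" "{Inl q} = U \<inter> S"
    unfolding openin_subtopology by blast
  then obtain r where "r \<noteq> q" "Inl r \<in> U"
    using QD_nbhd_rational_other_rational by blast
  then show False using U(2) assms by blast
qed

lemma QD_Inter_nbhds_of_rationals:
  assumes "uncountable D" "\<And>n::nat. openin (QD_topology D) (V n)" "\<And>n. Inl (q n) \<in> V n"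
  shows "(\<Inter>n. V n) \<noteq> {}"
proof -
  have "\<forall>n. \<exists>C. countable C \<and> Inr ` (D - C) \<subseteq> V n"
    using QD_nbhd_rational_cocountable[OF assms(2,3)] by metis
  then obtain C where C: "\<And>n. countable (C n)" "\<And>n. Inr ` (D - C n) \<subseteq> V n"
    by metis
  have "countable (\<Union>n. C n)" using C(1) by (simp add: countable_UN)
  then have "\<not> D \<subseteq> (\<Union>n. C n)"
    using assms(1) countable_subset by blast
  then obtain d where "d \<in> D" "\<And>n. d \<notin> C n" by blast
  then have "Inr d \<in> (\<Inter>n. V n)" using C(2) by blast
  then show ?thesis by blast
qed

lemma choquet_alpha_winning_QD_topology:
  assumes "uncountable D"
  shows "choquet_alpha_winning (QD_topology D)
           (\<lambda>h. isolating_strategy (QD_topology D) (fst (last h)) (snd (last h)))"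
proof (rule choquet_alpha_winning_isolating_strategy)
  fix x V
  assume nbhds: "\<And>n::nat. openin (QD_topology D) (V n) \<and> x n \<in> V n \<and> \<not> openin (QD_topology D) {x n}"
  have "\<exists>q. x n = Inl q" for n
  proof (cases "x n")
    case (Inr d)
    have "x n \<in> topspace (QD_topology D)" using nbhds[of n] openin_subset by blast
    with Inr have "openin (QD_topology D) {x n}"
      by (auto simp: topspace_QD_topology intro: openin_QD_topology_Inr)
    then show ?thesis using nbhds[of n] by blast
  qed simp
  then obtain q where "\<And>n. x n = Inl (q n)" by metis
  then show "(\<Inter>n. V n) \<noteq> {}"
    using nbhds by (intro QD_Inter_nbhds_of_rationals[OF assms, where q = q]) auto
qed

lemma not_baire_space_QD_subspace:
  fixes D :: "'d set"
  assumes S: "S \<subseteq> topspace (QD_topology D)" "range Inl \<subseteq> S"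
    and sep: "separable_space (subtopology (QD_topology D) S)"
  shows "\<not> baire_space (subtopology (QD_topology D) S)"
proof (rule not_baire_space_countable_nonisolated[where R = "range Inl"])
  let ?Y = "subtopology (QD_topology D) S"
  have topspace_Y: "topspace ?Y = S" using S(1) by (rule topspace_subtopology_subset)
  show "t1_space ?Y" by (simp add: t1_space_subtopology t1_space_QD_topology)
  show "countable (range Inl :: (rat + 'd) set)" by simp
  show "range Inl \<subseteq> topspace ?Y" using S(2) topspace_Y by simp
  show "\<not> openin ?Y {r}" if "r \<in> range Inl" for r
    using that QD_rational_not_isolated_in_subspace[OF S(2)] by blast
  define E where "E = {d. Inr d \<in> S}"
  have "Inr ` E \<subseteq> {x \<in> topspace ?Y. openin ?Y {x}}"
  proof clarify
    fix d assume "d \<in> E"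
    then have "Inr d \<in> S" "d \<in> D" using S(1) by (auto simp: E_def topspace_QD_topology)
    then show "Inr d \<in> topspace ?Y \<and> openin ?Y {Inr d}"
      using openin_QD_topology_Inr[of "{Inr d}" D] topspace_Y
      by (auto simp: openin_subtopology_alt)
  qed
  then have "countable (Inr ` E :: (rat + 'd) set)"
    using countable_isolated_points_separable_space[OF sep] by (rule countable_subset)
  then have "countable E" by (rule countable_image_inj_on) simp
  define N where "N = S \<inter> (range Inl \<union> Inr ` (D - E))"
  have "openin ?Y N"
    unfolding N_def using openin_QD_topology_basic[OF open_UNIV \<open>countable E\<close>, of D]
    by (intro openin_subtopology_Int2) simp
  moreover have "N \<inter> (topspace ?Y - range Inl) = {}"
    unfolding N_def E_def topspace_Y by auto
  ultimately have "N \<inter> ?Y closure_of (topspace ?Y - range Inl) = {}"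
    by (simp add: openin_Int_closure_of_eq_empty)
  moreover have "Inl 0 \<in> N" "Inl 0 \<in> topspace ?Y"
    unfolding N_def topspace_Y using S(2) by auto
  ultimately show "?Y closure_of (topspace ?Y - range Inl) \<noteq> topspace ?Y" by blast
qed

theorem mainTheorem7:
  fixes D :: "'d set"
  assumes "uncountable D"
  shows "t1_space (QD_topology D)
       \<and> strong_choquet_alpha_favorable (QD_topology D)
       \<and> strong_choquet_alpha_last_move_favorable (QD_topology D)
       \<and> \<not> (\<exists>\<F>. rich_family_of_Baire (QD_topology D) \<F>)
       \<and> (\<forall>S. S \<subseteq> topspace (QD_topology D) \<and> range Inl \<subseteq> S
              \<and> separable_space (subtopology (QD_topology D) S)
              \<longrightarrow> \<not> baire_space (subtopology (QD_topology D) S))"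
proof -
  let ?X = "QD_topology D"
  have winning: "choquet_alpha_winning ?X (\<lambda>h. isolating_strategy ?X (fst (last h)) (snd (last h)))"
    using assms by (rule choquet_alpha_winning_QD_topology)
  have rationals: "range Inl \<subseteq> topspace ?X" "separable_space (subtopology ?X (range Inl))"
    by (auto intro: separable_space_countable_topspace simp: topspace_QD_topology)
  have no_rich_family: "\<not> rich_family_of_Baire ?X \<F>" for \<F>
  proof
    assume "rich_family_of_Baire ?X \<F>"
    then obtain T where "range Inl \<subseteq> T" "T \<subseteq> topspace ?X"
      "separable_space (subtopology ?X T)" "baire_space (subtopology ?X T)"
      using rationals by (rule rich_family_of_Baire_obtains_Baire_superset)
    then show False using not_baire_space_QD_subspace by blast
  qed
  show ?thesis
    unfolding strong_choquet_alpha_favorable_def strong_choquet_alpha_last_move_favorable_def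
    using t1_space_QD_topology winning no_rich_family not_baire_space_QD_subspace by blast
qed

end
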